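(* Let $\eta^{(\varepsilon)}_n$, $\varepsilon\in(0,1]$, be Markov chains on $\mathbb{X}=\{1,\dots,N\}$ with transition probabilities $p_{ij}(\varepsilon)$ satisfying conditions A and D of the context for some $\varepsilon_0\in(0,1]$ and transition sets $\mathbb{Y}_i$. Fix $r\in\mathbb{X}$ and let $_r\eta^{(\varepsilon)}_n$ be the reduced Markov chain on $_r\mathbb{X}=\mathbb{X}\setminus\{r\}$, with transition probabilities $_rp_{ij}(\varepsilon)$, $i,j\in{}_r\mathbb{X}$. Then conditions A and D hold for the chains $_r\eta^{(\varepsilon)}_n$ with the same $\varepsilon_0$ and with transition sets $_r\mathbb{Y}_i=\mathbb{Y}^-_{ir}\cup\mathbb{Y}^+_{ir}$, $i\in{}_r\mathbb{X}$; in particular, for every $j\in{}_r\mathbb{Y}_i$, $i\in{}_r\mathbb{X}$, $_rp_{ij}(\varepsilon)$ admits a pivotal $(_rl^-_{ij},{}_rl^+_{ij})$-expansion $_rp_{ij}(\varepsilon)=\sum_{l={}_rl^-_{ij}}^{_rl^+_{ij}}{}_ra_{ij}[l]\varepsilon^l+{}_ro_{ij}(\varepsilon^{_rl^+_{ij}})$, $\varepsilon\in(0,\varepsilon_0]$, with $0\le{}_rl^-_{ij}\le{}_rl^+_{ij}$ and $_ra_{ij}[_rl^-_{ij}]>0$.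
   Context: A $(h,k)$-expansion of a function $A$ on $(0,\varepsilon_0]$ is a representation $A(\varepsilon)=\sum_{l=h}^k a_l\varepsilon^l+o_A(\varepsilon^k)$ with integers $h\le k$, real $a_l$, and $o_A(\varepsilon^k)/\varepsilon^k\to0$ as $\varepsilon\to0$; pivotal means $a_h\ne0$. For $\varepsilon\in(0,1]$, $\eta^{(\varepsilon)}_n$ is a homogeneous Markov chain on $\mathbb{X}=\{1,\dots,N\}$ with stochastic transition matrix $\|p_{ij}(\varepsilon)\|$. Condition A: there exist $\mathbb{Y}_i\subseteq\mathbb{X}$, $i\in\mathbb{X}$, and $\varepsilon_0\in(0,1]$ such that for $\varepsilon\in(0,\varepsilon_0]$: (a) $p_{ij}(\varepsilon)>0$ for $j\in\mathbb{Y}_i$; (b) $p_{ij}(\varepsilon)=0$ for $j\notin\mathbb{Y}_i$; (c) for every $i,j\in\mathbb{X}$ there exist $n\ge1$ and $i=l_0,\dots,l_n=j$ with $l_{k+1}\in\mathbb{Y}_{l_k}$. Condition D: for $j\in\mathbb{Y}_i$, $i\in\mathbb{X}$: $p_{ij}(\varepsilon)=\sum_{l=l^-_{ij}}^{l^+_{ij}}a_{ij}[l]\varepsilon^l+o_{ij}(\varepsilon^{l^+_{ij}})$, $\varepsilon\in(0,\varepsilon_0]$, with integers $0\le l^-_{ij}\le l^+_{ij}<\infty$, $a_{ij}[l^-_{ij}]>0$ and $o_{ij}(\varepsilon^{l^+_{ij}})/\varepsilon^{l^+_{ij}}\to0$. Reduced chain: $_r\xi_0=0$, $_r\xi_n=\min\{k>{}_r\xi_{n-1}:\eta^{(\varepsilon)}_k\ne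 r\}$, $_r\eta^{(\varepsilon)}_n=\eta^{(\varepsilon)}_{_r\xi_n}$ (started from a state in $_r\mathbb{X}$); its transition probabilities are $_rp_{ij}(\varepsilon)=p_{ij}(\varepsilon)+p_{ir}(\varepsilon)\frac{p_{rj}(\varepsilon)}{1-p_{rr}(\varepsilon)}$, $i,j\in{}_r\mathbb{X}$. Sets: $\mathbb{Y}^-_{ir}=\{j\in{}_r\mathbb{X}:j\in\mathbb{Y}_r\}$ if $r\in\mathbb{Y}_i$ and $\mathbb{Y}^-_{ir}=\emptyset$ if $r\notin\mathbb{Y}_i$; $\mathbb{Y}^+_{ir}=\{j\in{}_r\mathbb{X}:j\in\mathbb{Y}_i\}$. *)

theory Defs
  imports Complex_Main
begin

text \<open>Transition probabilities are modelled as p :: real => nat => nat => real,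
  p eps i j being p_ij(eps). State spaces are finite sets of naturals.\<close>

definition stochastic :: "nat set \<Rightarrow> (real \<Rightarrow> nat \<Rightarrow> nat \<Rightarrow> real) \<Rightarrow> bool" where
  "stochastic X p \<longleftrightarrow>
     (\<forall>\<epsilon>\<in>{0<..1}. \<forall>i\<in>X. (\<forall>j\<in>X. 0 \<le> p \<epsilon> i j) \<and> (\<Sum>j\<in>X. p \<epsilon> i j) = 1)"

definition condA :: "nat set \<Rightarrow> (nat \<Rightarrow> nat set) \<Rightarrow> real \<Rightarrow> (real \<Rightarrow> nat \<Rightarrow> nat \<Rightarrow> real) \<Rightarrow> bool" where
  "condA X Y \<epsilon>0 p \<longleftrightarrow>
     0 < \<epsilon>0 \<and> \<epsilon>0 \<le> 1 \<and> (\<forall>i\<in>X. Y i \<subseteq> X) \<and>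
     (\<forall>\<epsilon>\<in>{0<..\<epsilon>0}. \<forall>i\<in>X. \<forall>j\<in>X.
         (j \<in> Y i \<longrightarrow> p \<epsilon> i j > 0) \<and> (j \<notin> Y i \<longrightarrow> p \<epsilon> i j = 0)) \<and>
     (\<forall>i\<in>X. \<forall>j\<in>X. \<exists>n::nat. \<exists>l::nat \<Rightarrow> nat.
         n \<ge> 1 \<and> l 0 = i \<and> l n = j \<and> (\<forall>k<n. l (Suc k) \<in> Y (l k)))"

definition condD :: "nat set \<Rightarrow> (nat \<Rightarrow> nat set) \<Rightarrow> real \<Rightarrow> (real \<Rightarrow> nat \<Rightarrow> nat \<Rightarrow> real) \<Rightarrow> bool" where
  "condD X Y \<epsilon>0 p \<longleftrightarrow>
     (\<forall>i\<in>X. \<forall>j\<in>Y i. \<exists>(lm::nat) (lp::nat) (a::nat \<Rightarrow> real) (rem::real \<Rightarrow> real).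
        lm \<le> lp \<and> a lm > 0 \<and>
        (\<forall>\<epsilon>\<in>{0<..\<epsilon>0}. p \<epsilon> i j = (\<Sum>l=lm..lp. a l * \<epsilon> ^ l) + rem \<epsilon>) \<and>
        ((\<lambda>\<epsilon>. rem \<epsilon> / \<epsilon> ^ lp) \<longlongrightarrow> 0) (at_right 0))"

definition red_p :: "(real \<Rightarrow> nat \<Rightarrow> nat \<Rightarrow> real) \<Rightarrow> nat \<Rightarrow> real \<Rightarrow> nat \<Rightarrow> nat \<Rightarrow> real" where
  "red_p p r \<epsilon> i j = p \<epsilon> i j + p \<epsilon> i r * (p \<epsilon> r j / (1 - p \<epsilon> r r))"

definition Yminus :: "nat set \<Rightarrow> (nat \<Rightarrow> nat set) \<Rightarrow> nat \<Rightarrow> nat \<Rightarrow> nat set" where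
  "Yminus X Y i r = (if r \<in> Y i then {j \<in> X - {r}. j \<in> Y r} else {})"

definition Yplus :: "nat set \<Rightarrow> (nat \<Rightarrow> nat set) \<Rightarrow> nat \<Rightarrow> nat \<Rightarrow> nat set" where
  "Yplus X Y i r = {j \<in> X - {r}. j \<in> Y i}"

definition red_Y :: "nat set \<Rightarrow> (nat \<Rightarrow> nat set) \<Rightarrow> nat \<Rightarrow> nat \<Rightarrow> nat set" where
  "red_Y X Y r i = Yminus X Y i r \<union> Yplus X Y i r"

end

theory Submission
  imports Defs
begin

text \<open>A function with a pivotal expansion on (0, \<epsilon>0] is exactly one with f \<epsilon> / \<epsilon>^m \<rightarrow> a > 0 as
  \<epsilon> \<rightarrow> 0+, and this class is closed under sums, products and quotients f / g with 0 < f \<le> g.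
  The reduced probability p_ij + p_ir p_rj / (1 - p_rr) is built from such functions: the
  denominator 1 - p_rr is the sum of the p_rk with k \<noteq> r, a nonempty sum because irreducibility
  forces an exit from r, and it dominates p_rj. Irreducibility of the reduced chain holds because
  every path between states other than r can be made to avoid r.\<close>

definition has_leading_term :: "(real \<Rightarrow> real) \<Rightarrow> nat \<Rightarrow> real \<Rightarrow> bool" where
  "has_leading_term f m a \<longleftrightarrow> ((\<lambda>\<epsilon>. f \<epsilon> / \<epsilon> ^ m) \<longlongrightarrow> a) (at_right 0)"

definition pivotal :: "(real \<Rightarrow> real) \<Rightarrow> bool" where
  "pivotal f \<longleftrightarrow> (\<exists>m a. 0 < a \<and> has_leading_term f m a)"

lemma eventually_at_right_0_Ioc:
  "0 < \<epsilon>0 \<Longrightarrow> eventually (\<lambda>\<epsilon>. \<epsilon> \<in> {0<..\<epsilon>0}) (at_right (0::real))"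
  by (rule eventually_at_rightI[of 0 \<epsilon>0]) simp_all

lemma has_leading_term_cong:
  assumes "has_leading_term f m a" "eventually (\<lambda>\<epsilon>. f \<epsilon> = g \<epsilon>) (at_right 0)"
  shows "has_leading_term g m a"
  using assms unfolding has_leading_term_def
  by (elim Lim_transform_eventually) (auto elim: eventually_mono)

text \<open>The factor 0 ^ (n - m) is 1 if m = n and 0 if m < n.\<close>
lemma has_leading_term_rescale:
  assumes "has_leading_term f n b" "m \<le> n"
  shows "((\<lambda>\<epsilon>. f \<epsilon> / \<epsilon> ^ m) \<longlongrightarrow> b * 0 ^ (n - m)) (at_right 0)"
proof -
  have "((\<lambda>\<epsilon>. f \<epsilon> / \<epsilon> ^ n * \<epsilon> ^ (n - m)) \<longlongrightarrow> b * 0 ^ (n - m)) (at_right 0)"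
    using assms(1) unfolding has_leading_term_def by (intro tendsto_intros) auto
  moreover have "eventually (\<lambda>\<epsilon>. f \<epsilon> / \<epsilon> ^ n * \<epsilon> ^ (n - m) = f \<epsilon> / \<epsilon> ^ m) (at_right 0)"
    using eventually_at_right_less
  proof eventually_elim
    case (elim \<epsilon>)
    have "\<epsilon> ^ n = \<epsilon> ^ m * \<epsilon> ^ (n - m)" using assms(2) by (simp flip: power_add)
    then show ?case using elim by simp
  qed
  ultimately show ?thesis by (rule Lim_transform_eventually)
qed

lemma has_leading_term_add:
  assumes "has_leading_term f m a" "has_leading_term g n b" "m \<le> n"
  shows "has_leading_term (\<lambda>\<epsilon>. f \<epsilon> + g \<epsilon>) m (a + b * 0 ^ (n - m))"
  using tendsto_add[OF assms(1)[unfolded has_leading_term_def] has_leading_term_rescale[OF assms(2,3)]]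
  unfolding has_leading_term_def by (simp add: add_divide_distrib)

lemma has_leading_term_mult:
  assumes "has_leading_term f m a" "has_leading_term g n b"
  shows "has_leading_term (\<lambda>\<epsilon>. f \<epsilon> * g \<epsilon>) (m + n) (a * b)"
  using tendsto_mult[OF assms[unfolded has_leading_term_def]]
  unfolding has_leading_term_def by (simp add: power_add)

lemma has_leading_term_divide:
  assumes "has_leading_term f m a" "has_leading_term g n b" "n \<le> m" "b \<noteq> 0"
  shows "has_leading_term (\<lambda>\<epsilon>. f \<epsilon> / g \<epsilon>) (m - n) (a / b)"
proof -
  have "((\<lambda>\<epsilon>. (f \<epsilon> / \<epsilon> ^ m) / (g \<epsilon> / \<epsilon> ^ n)) \<longlongrightarrow> a / b) (at_right 0)"
    using assms unfolding has_leading_term_def by (intro tendsto_intros)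
  moreover have "eventually (\<lambda>\<epsilon>. (f \<epsilon> / \<epsilon> ^ m) / (g \<epsilon> / \<epsilon> ^ n) = (f \<epsilon> / g \<epsilon>) / \<epsilon> ^ (m - n))
      (at_right 0)"
    using eventually_at_right_less
  proof eventually_elim
    case (elim \<epsilon>)
    have "\<epsilon> ^ m = \<epsilon> ^ n * \<epsilon> ^ (m - n)" using assms(3) by (simp flip: power_add)
    then show ?case using elim by (simp add: field_simps)
  qed
  ultimately show ?thesis unfolding has_leading_term_def by (rule Lim_transform_eventually)
qed

lemma has_leading_term_order_le:
  assumes "has_leading_term f m a" "has_leading_term g n b" "0 < a"
    and "eventually (\<lambda>\<epsilon>. 0 < f \<epsilon> \<and> f \<epsilon> \<le> g \<epsilon>) (at_right 0)"
  shows "n \<le> m"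
proof (rule ccontr)
  assume "\<not> n \<le> m"
  then have g0: "((\<lambda>\<epsilon>. g \<epsilon> / \<epsilon> ^ m) \<longlongrightarrow> 0) (at_right 0)"
    using has_leading_term_rescale[OF assms(2), of m] by (simp add: zero_power)
  have "eventually (\<lambda>\<epsilon>. f \<epsilon> / \<epsilon> ^ m \<le> g \<epsilon> / \<epsilon> ^ m) (at_right 0)"
    using assms(4) eventually_at_right_less
    by eventually_elim (simp add: divide_right_mono)
  from tendsto_le[OF trivial_limit_at_right_real g0 assms(1)[unfolded has_leading_term_def] this]
  have "a \<le> 0" .
  with assms(3) show False by simp
qed

lemma pivotal_cong:
  "pivotal f \<Longrightarrow> eventually (\<lambda>\<epsilon>. f \<epsilon> = g \<epsilon>) (at_right 0) \<Longrightarrow> pivotal g"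
  unfolding pivotal_def by (metis has_leading_term_cong)

lemma pivotal_add:
  assumes "pivotal f" "pivotal g"
  shows "pivotal (\<lambda>\<epsilon>. f \<epsilon> + g \<epsilon>)"
proof -
  have *: "pivotal (\<lambda>\<epsilon>. f \<epsilon> + g \<epsilon>)"
    if "has_leading_term f m a" "has_leading_term g n b" "0 < a" "0 < b" "m \<le> n"
    for f g :: "real \<Rightarrow> real" and m n a b
  proof -
    have "0 < a + b * 0 ^ (n - m)" using that(3,4) by (cases "n - m") auto
    then show ?thesis using has_leading_term_add[OF that(1,2,5)] unfolding pivotal_def by blast
  qed
  obtain m a n b where f: "has_leading_term f m a" "0 < a" and g: "has_leading_term g n b" "0 < b"
    using assms unfolding pivotal_def by blast
  show ?thesis
  proof (cases "m \<le> n")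
    case True
    with *[OF f(1) g(1) f(2) g(2)] show ?thesis .
  next
    case False
    with *[OF g(1) f(1) g(2) f(2)] show ?thesis by (simp add: add.commute)
  qed
qed

lemma pivotal_mult: "pivotal f \<Longrightarrow> pivotal g \<Longrightarrow> pivotal (\<lambda>\<epsilon>. f \<epsilon> * g \<epsilon>)"
  unfolding pivotal_def by (blast intro: has_leading_term_mult mult_pos_pos)

lemma pivotal_divide:
  assumes "pivotal f" "pivotal g" "eventually (\<lambda>\<epsilon>. 0 < f \<epsilon> \<and> f \<epsilon> \<le> g \<epsilon>) (at_right 0)"
  shows "pivotal (\<lambda>\<epsilon>. f \<epsilon> / g \<epsilon>)"
proof -
  obtain m a n b where f: "has_leading_term f m a" "0 < a" and g: "has_leading_term g n b" "0 < b"
    using assms(1,2) unfolding pivotal_def by blast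
  have "n \<le> m" using has_leading_term_order_le[OF f(1) g(1) f(2) assms(3)] .
  then have "has_leading_term (\<lambda>\<epsilon>. f \<epsilon> / g \<epsilon>) (m - n) (a / b)"
    using has_leading_term_divide[OF f(1) g(1)] g(2) by simp
  with f(2) g(2) show ?thesis unfolding pivotal_def by (blast intro: divide_pos_pos)
qed

lemma pivotal_sum:
  "finite S \<Longrightarrow> S \<noteq> {} \<Longrightarrow> (\<And>k. k \<in> S \<Longrightarrow> pivotal (f k)) \<Longrightarrow> pivotal (\<lambda>\<epsilon>. \<Sum>k\<in>S. f k \<epsilon>)"
  by (induction S rule: finite_ne_induct) (simp_all add: pivotal_add)

lemma pivotal_add_or_vanishing:
  assumes "pivotal f \<or> eventually (\<lambda>\<epsilon>. f \<epsilon> = 0) (at_right 0)"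
    and "pivotal g \<or> eventually (\<lambda>\<epsilon>. g \<epsilon> = 0) (at_right 0)"
    and "pivotal f \<or> pivotal g"
  shows "pivotal (\<lambda>\<epsilon>. f \<epsilon> + g \<epsilon>)"
proof -
  have *: "pivotal (\<lambda>\<epsilon>. f \<epsilon> + g \<epsilon>)"
    if "pivotal f" "eventually (\<lambda>\<epsilon>. g \<epsilon> = 0) (at_right 0)" for f g :: "real \<Rightarrow> real"
    using that(1) by (rule pivotal_cong) (rule eventually_mono[OF that(2)], simp)
  show ?thesis using assms *[of f g] *[of g f] pivotal_add[of f g] by (auto simp: add.commute)
qed

lemma has_leading_term_expansion:
  assumes "lm \<le> lp" "0 < \<epsilon>0"
    and f: "\<forall>\<epsilon>\<in>{0<..\<epsilon>0}. f \<epsilon> = (\<Sum>l=lm..lp. a l * \<epsilon> ^ l) + rem \<epsilon>"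
    and rem: "((\<lambda>\<epsilon>. rem \<epsilon> / \<epsilon> ^ lp) \<longlongrightarrow> 0) (at_right 0)"
  shows "has_leading_term f lm (a lm)"
proof -
  have "((\<lambda>\<epsilon>. \<Sum>l=lm..lp. a l * \<epsilon> ^ (l - lm)) \<longlongrightarrow> (\<Sum>l=lm..lp. a l * 0 ^ (l - lm)))
      (at_right 0)"
    by (intro tendsto_intros)
  also have "(\<Sum>l=lm..lp. a l * 0 ^ (l - lm)) = (\<Sum>l\<in>{lm}. a l * 0 ^ (l - lm))"
    by (rule sum.mono_neutral_right) (use assms(1) in auto)
  finally have "((\<lambda>\<epsilon>. (\<Sum>l=lm..lp. a l * \<epsilon> ^ (l - lm)) + rem \<epsilon> / \<epsilon> ^ lm) \<longlongrightarrow> a lm + 0 * 0 ^ (lp - lm))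
      (at_right 0)"
    using has_leading_term_rescale[OF rem[folded has_leading_term_def] assms(1)]
    by (intro tendsto_add) auto
  moreover have "eventually (\<lambda>\<epsilon>. (\<Sum>l=lm..lp. a l * \<epsilon> ^ (l - lm)) + rem \<epsilon> / \<epsilon> ^ lm = f \<epsilon> / \<epsilon> ^ lm)
      (at_right 0)"
    using eventually_at_right_0_Ioc[OF assms(2)]
  proof eventually_elim
    case (elim \<epsilon>)
    have "(\<Sum>l=lm..lp. a l * \<epsilon> ^ (l - lm)) = (\<Sum>l=lm..lp. a l * \<epsilon> ^ l) / \<epsilon> ^ lm"
      unfolding sum_divide_distrib
    proof (rule sum.cong)
      fix l assume "l \<in> {lm..lp}"
      then have "\<epsilon> ^ l = \<epsilon> ^ lm * \<epsilon> ^ (l - lm)" by (simp flip: power_add)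
      then show "a l * \<epsilon> ^ (l - lm) = a l * \<epsilon> ^ l / \<epsilon> ^ lm" using elim by simp
    qed simp
    then show ?case using f elim by (simp add: add_divide_distrib)
  qed
  ultimately show ?thesis unfolding has_leading_term_def by (simp add: Lim_transform_eventually)
qed

lemma pivotal_iff_expansion:
  assumes "0 < \<epsilon>0"
  shows "(\<exists>(lm::nat) (lp::nat) (a::nat \<Rightarrow> real) (rem::real \<Rightarrow> real).
            lm \<le> lp \<and> a lm > 0 \<and>
            (\<forall>\<epsilon>\<in>{0<..\<epsilon>0}. f \<epsilon> = (\<Sum>l=lm..lp. a l * \<epsilon> ^ l) + rem \<epsilon>) \<and>
            ((\<lambda>\<epsilon>. rem \<epsilon> / \<epsilon> ^ lp) \<longlongrightarrow> 0) (at_right 0))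
         \<longleftrightarrow> pivotal f"
proof
  assume "\<exists>lm lp a rem. lm \<le> lp \<and> a lm > 0 \<and>
            (\<forall>\<epsilon>\<in>{0<..\<epsilon>0}. f \<epsilon> = (\<Sum>l=lm..lp. a l * \<epsilon> ^ l) + rem \<epsilon>) \<and>
            ((\<lambda>\<epsilon>. rem \<epsilon> / \<epsilon> ^ lp) \<longlongrightarrow> 0) (at_right 0)"
  then show "pivotal f"
    unfolding pivotal_def using has_leading_term_expansion[OF _ assms] by blast
next
  assume "pivotal f"
  then obtain m c where c: "0 < c" "has_leading_term f m c" unfolding pivotal_def by blast
  \<comment> \<open>The one-term expansion c \<epsilon>^m, with the rest of f as remainder.\<close>
  have "((\<lambda>\<epsilon>. f \<epsilon> / \<epsilon> ^ m - c) \<longlongrightarrow> c - c) (at_right 0)"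
    using c(2) unfolding has_leading_term_def by (intro tendsto_intros)
  moreover have "eventually (\<lambda>\<epsilon>. f \<epsilon> / \<epsilon> ^ m - c = (f \<epsilon> - c * \<epsilon> ^ m) / \<epsilon> ^ m) (at_right 0)"
    using eventually_at_right_less by eventually_elim (simp add: diff_divide_distrib)
  ultimately have "((\<lambda>\<epsilon>. (f \<epsilon> - c * \<epsilon> ^ m) / \<epsilon> ^ m) \<longlongrightarrow> 0) (at_right 0)"
    by (simp add: Lim_transform_eventually)
  with c(1) show "\<exists>lm lp a rem. lm \<le> lp \<and> a lm > 0 \<and>
            (\<forall>\<epsilon>\<in>{0<..\<epsilon>0}. f \<epsilon> = (\<Sum>l=lm..lp. a l * \<epsilon> ^ l) + rem \<epsilon>) \<and>
            ((\<lambda>\<epsilon>. rem \<epsilon> / \<epsilon> ^ lp) \<longlongrightarrow> 0) (at_right 0)"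
    by (intro exI[of _ m] exI[of _ m] exI[of _ "\<lambda>_. c"] exI[of _ "\<lambda>\<epsilon>. f \<epsilon> - c * \<epsilon> ^ m"]) auto
qed

lemma condD_iff_pivotal:
  "0 < \<epsilon>0 \<Longrightarrow> condD X Y \<epsilon>0 p \<longleftrightarrow> (\<forall>i\<in>X. \<forall>j\<in>Y i. pivotal (\<lambda>\<epsilon>. p \<epsilon> i j))"
  unfolding condD_def by (simp only: pivotal_iff_expansion)

lemma tranclp_iff_path:
  "R\<^sup>+\<^sup>+ a b \<longleftrightarrow> (\<exists>n l. 1 \<le> n \<and> l 0 = a \<and> l n = b \<and> (\<forall>k<n. R (l k) (l (Suc k))))"
  by (auto simp: tranclp_power relpowp_fun_conv Suc_le_eq)

lemma tranclp_from_absorbing: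
  assumes "\<And>c. R r c \<Longrightarrow> c = r" "R\<^sup>+\<^sup>+ r b"
  shows "b = r"
  using assms(2) by (induction rule: tranclp_induct) (use assms(1) in auto)

definition bypass :: "('a \<Rightarrow> 'a \<Rightarrow> bool) \<Rightarrow> 'a \<Rightarrow> 'a \<Rightarrow> 'a \<Rightarrow> bool" where
  "bypass R r x y \<longleftrightarrow> x \<noteq> r \<and> y \<noteq> r \<and> (R x y \<or> R x r \<and> R r y)"

text \<open>Any path from a to b through r can be shortened to a path avoiding r: each maximal
  visit to r is entered from some c and left towards some d, and is replaced by one step c to d.\<close>
lemma tranclp_bypass:
  assumes "R\<^sup>+\<^sup>+ a b" "a \<noteq> r" "b \<noteq> r"
  shows "(bypass R r)\<^sup>+\<^sup>+ a b"
proof -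
  let ?B = "bypass R r"
  have "(b \<noteq> r \<longrightarrow> ?B\<^sup>+\<^sup>+ a b) \<and> (b = r \<longrightarrow> (\<exists>c. ?B\<^sup>*\<^sup>* a c \<and> c \<noteq> r \<and> R c r))"
    using assms(1)
  proof (induction rule: tranclp_induct)
    case (base y)
    then show ?case using assms(2) by (auto simp: bypass_def)
  next
    case (step y z)
    show ?case
    proof (cases "y = r")
      case True
      then obtain c where c: "?B\<^sup>*\<^sup>* a c" "c \<noteq> r" "R c r" using step.IH by blast
      have "z \<noteq> r \<Longrightarrow> ?B c z" using c(2,3) step.hyps(2) True by (auto simp: bypass_def)
      then show ?thesis using c by (auto intro: rtranclp_into_tranclp1)
    next
      case False
      then have ay: "?B\<^sup>+\<^sup>+ a y" using step.IH by blast
      have "z \<noteq> r \<Longrightarrow> ?B y z" using False step.hyps(2) by (auto simp: bypass_def)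
      then show ?thesis using ay False step.hyps(2)
        by (auto intro: tranclp.trancl_into_trancl tranclp_into_rtranclp)
    qed
  qed
  with assms(3) show ?thesis by blast
qed

lemma red_Y_eq: "red_Y X Y r i = {j \<in> X - {r}. j \<in> Y i \<or> r \<in> Y i \<and> j \<in> Y r}"
  unfolding red_Y_def Yminus_def Yplus_def by auto

locale perturbed_chain =
  fixes X :: "nat set" and Y :: "nat \<Rightarrow> nat set" and \<epsilon>0 :: real
    and p :: "real \<Rightarrow> nat \<Rightarrow> nat \<Rightarrow> real"
  assumes finite_X: "finite X"
    and stochastic: "stochastic X p"
    and condA: "condA X Y \<epsilon>0 p"
    and condD: "condD X Y \<epsilon>0 p"
begin

lemma eps0_pos: "0 < \<epsilon>0" and eps0_le_1: "\<epsilon>0 \<le> 1"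
  using condA unfolding condA_def by auto

lemma Y_subset: "i \<in> X \<Longrightarrow> Y i \<subseteq> X"
  using condA unfolding condA_def by auto

lemma p_pos: "\<epsilon> \<in> {0<..\<epsilon>0} \<Longrightarrow> i \<in> X \<Longrightarrow> j \<in> Y i \<Longrightarrow> 0 < p \<epsilon> i j"
  using condA Y_subset unfolding condA_def by blast

lemma p_eq_0: "\<epsilon> \<in> {0<..\<epsilon>0} \<Longrightarrow> i \<in> X \<Longrightarrow> j \<in> X \<Longrightarrow> j \<notin> Y i \<Longrightarrow> p \<epsilon> i j = 0"
  using condA unfolding condA_def by blast

lemma p_nonneg: "\<epsilon> \<in> {0<..\<epsilon>0} \<Longrightarrow> i \<in> X \<Longrightarrow> j \<in> X \<Longrightarrow> 0 \<le> p \<epsilon> i j"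
  using stochastic eps0_le_1 unfolding stochastic_def by auto

lemma p_row_sum: "\<epsilon> \<in> {0<..\<epsilon>0} \<Longrightarrow> i \<in> X \<Longrightarrow> (\<Sum>j\<in>X. p \<epsilon> i j) = 1"
  using stochastic eps0_le_1 unfolding stochastic_def by auto

lemma p_vanishing: "i \<in> X \<Longrightarrow> j \<in> X \<Longrightarrow> j \<notin> Y i \<Longrightarrow> eventually (\<lambda>\<epsilon>. p \<epsilon> i j = 0) (at_right 0)"
  using eventually_at_right_0_Ioc[OF eps0_pos] by eventually_elim (rule p_eq_0)

lemma pivotal_p: "i \<in> X \<Longrightarrow> j \<in> Y i \<Longrightarrow> pivotal (\<lambda>\<epsilon>. p \<epsilon> i j)"
  using condD unfolding condD_iff_pivotal[OF eps0_pos] by blast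

lemma reachable: "i \<in> X \<Longrightarrow> j \<in> X \<Longrightarrow> (\<lambda>a b. b \<in> Y a)\<^sup>+\<^sup>+ i j"
  using condA unfolding condA_def tranclp_iff_path by blast

end

locale perturbed_chain_reduction = perturbed_chain +
  fixes r :: nat
  assumes r_in_X: "r \<in> X"
    and X_minus_r_nonempty: "X - {r} \<noteq> {}"
begin

lemma exit_from_r: obtains k where "k \<in> Y r" "k \<noteq> r"
proof -
  obtain i where i: "i \<in> X - {r}" using X_minus_r_nonempty by blast
  have "\<exists>k. k \<in> Y r \<and> k \<noteq> r"
    using tranclp_from_absorbing[OF _ reachable[OF r_in_X, of i]] i by blast
  with that show ?thesis by blast
qed

lemma escape_prob_eq: "\<epsilon> \<in> {0<..\<epsilon>0} \<Longrightarrow> 1 - p \<epsilon> r r = (\<Sum>k\<in>X - {r}. p \<epsilon> r k)"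
  using p_row_sum[of \<epsilon> r] sum.remove[OF finite_X r_in_X, of "p \<epsilon> r"] r_in_X by simp

lemma p_le_escape_prob:
  assumes \<epsilon>: "\<epsilon> \<in> {0<..\<epsilon>0}" and j: "j \<in> X - {r}"
  shows "p \<epsilon> r j \<le> 1 - p \<epsilon> r r"
  unfolding escape_prob_eq[OF \<epsilon>]
  by (rule member_le_sum[OF j]) (auto intro: p_nonneg[OF \<epsilon> r_in_X] finite_X)

lemma escape_prob_pos:
  assumes \<epsilon>: "\<epsilon> \<in> {0<..\<epsilon>0}"
  shows "0 < 1 - p \<epsilon> r r"
proof -
  obtain k where k: "k \<in> Y r" "k \<noteq> r" using exit_from_r .
  then have "k \<in> X - {r}" using Y_subset[OF r_in_X] by blast
  with k show ?thesis using p_pos[OF \<epsilon> r_in_X k(1)] p_le_escape_prob[OF \<epsilon>] by force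
qed

text \<open>Only the exits from r to Y r - {r} contribute to the escape probability.\<close>
lemma pivotal_escape_prob: "pivotal (\<lambda>\<epsilon>. 1 - p \<epsilon> r r)"
proof -
  have S: "Y r - {r} \<subseteq> X - {r}" using Y_subset[OF r_in_X] by blast
  have "finite (Y r - {r})" using finite_subset[OF S] finite_X by blast
  moreover have "Y r - {r} \<noteq> {}" using exit_from_r by blast
  ultimately have "pivotal (\<lambda>\<epsilon>. \<Sum>k\<in>Y r - {r}. p \<epsilon> r k)"
    by (rule pivotal_sum) (simp add: pivotal_p[OF r_in_X])
  moreover have "eventually (\<lambda>\<epsilon>. (\<Sum>k\<in>Y r - {r}. p \<epsilon> r k) = 1 - p \<epsilon> r r) (at_right 0)"
    using eventually_at_right_0_Ioc[OF eps0_pos]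
  proof eventually_elim
    case (elim \<epsilon>)
    show ?case unfolding escape_prob_eq[OF elim]
      by (rule sum.mono_neutral_left) (use S finite_X r_in_X p_eq_0[OF elim] in auto)
  qed
  ultimately show ?thesis by (rule pivotal_cong)
qed

lemma red_p_pos:
  assumes \<epsilon>: "\<epsilon> \<in> {0<..\<epsilon>0}" and i: "i \<in> X - {r}" and j: "j \<in> red_Y X Y r i"
  shows "0 < red_p p r \<epsilon> i j"
proof -
  have jX: "j \<in> X - {r}" and jY: "j \<in> Y i \<or> r \<in> Y i \<and> j \<in> Y r" using j unfolding red_Y_eq by auto
  have "0 \<le> p \<epsilon> i j" "0 \<le> p \<epsilon> i r * (p \<epsilon> r j / (1 - p \<epsilon> r r))"
    using p_nonneg[OF \<epsilon>] escape_prob_pos[OF \<epsilon>] i jX r_in_X by auto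
  moreover have "0 < p \<epsilon> i j \<or> 0 < p \<epsilon> i r * (p \<epsilon> r j / (1 - p \<epsilon> r r))"
    using jY p_pos[OF \<epsilon>] escape_prob_pos[OF \<epsilon>] i r_in_X by auto
  ultimately show ?thesis unfolding red_p_def by linarith
qed

lemma red_p_eq_0:
  assumes \<epsilon>: "\<epsilon> \<in> {0<..\<epsilon>0}" and i: "i \<in> X - {r}" and j: "j \<in> X - {r}" "j \<notin> red_Y X Y r i"
  shows "red_p p r \<epsilon> i j = 0"
proof -
  have "j \<notin> Y i" "r \<notin> Y i \<or> j \<notin> Y r" using j unfolding red_Y_eq by auto
  then have "p \<epsilon> i j = 0" "p \<epsilon> i r = 0 \<or> p \<epsilon> r j = 0"
    using p_eq_0[OF \<epsilon>] i j r_in_X by auto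
  then show ?thesis unfolding red_p_def by auto
qed

lemma reduced_reachable:
  assumes "i \<in> X - {r}" "j \<in> X - {r}"
  shows "(\<lambda>a b. b \<in> red_Y X Y r a)\<^sup>+\<^sup>+ i j"
proof -
  have "(bypass (\<lambda>a b. b \<in> Y a) r)\<^sup>+\<^sup>+ i j"
    using tranclp_bypass[OF reachable] assms by blast
  then have "(\<lambda>a b. b \<in> red_Y X Y r a)\<^sup>+\<^sup>+ i j \<and> j \<in> X"
  proof (induction rule: tranclp_induct)
    case (base y)
    then show ?case using assms(1) Y_subset r_in_X by (auto simp: bypass_def red_Y_eq)
  next
    case (step y z)
    then have z: "z \<in> red_Y X Y r y" using Y_subset r_in_X by (auto simp: bypass_def red_Y_eq)
    then have "z \<in> X" unfolding red_Y_eq by blast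
    with z step.IH show ?case by (metis (no_types, lifting) tranclp.trancl_into_trancl)
  qed
  then show ?thesis ..
qed

lemma condA_reduced: "condA (X - {r}) (red_Y X Y r) \<epsilon>0 (red_p p r)"
  unfolding condA_def
  using eps0_pos eps0_le_1 red_p_pos red_p_eq_0 reduced_reachable[unfolded tranclp_iff_path]
  by (auto simp: red_Y_eq)

lemma pivotal_red_p:
  assumes i: "i \<in> X - {r}" and j: "j \<in> red_Y X Y r i"
  shows "pivotal (\<lambda>\<epsilon>. red_p p r \<epsilon> i j)"
proof -
  have jX: "j \<in> X - {r}" and jY: "j \<in> Y i \<or> r \<in> Y i \<and> j \<in> Y r" using j unfolding red_Y_eq by auto
  let ?q = "\<lambda>\<epsilon>. p \<epsilon> i r * (p \<epsilon> r j / (1 - p \<epsilon> r r))"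
  have direct: "pivotal (\<lambda>\<epsilon>. p \<epsilon> i j) \<or> eventually (\<lambda>\<epsilon>. p \<epsilon> i j = 0) (at_right 0)"
    using pivotal_p[of i j] p_vanishing[of i j] i jX by blast
  have via_r: "pivotal ?q" if "r \<in> Y i" "j \<in> Y r"
  proof -
    have "eventually (\<lambda>\<epsilon>. 0 < p \<epsilon> r j \<and> p \<epsilon> r j \<le> 1 - p \<epsilon> r r) (at_right 0)"
      using eventually_at_right_0_Ioc[OF eps0_pos]
      by eventually_elim (use p_pos p_le_escape_prob r_in_X that jX in auto)
    then show ?thesis
      using that i r_in_X by (intro pivotal_mult pivotal_divide pivotal_p pivotal_escape_prob) auto
  qed
  have "pivotal ?q \<or> eventually (\<lambda>\<epsilon>. ?q \<epsilon> = 0) (at_right 0)"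
  proof (cases "r \<in> Y i \<and> j \<in> Y r")
    case False
    then have "eventually (\<lambda>\<epsilon>. p \<epsilon> i r = 0) (at_right 0) \<or> eventually (\<lambda>\<epsilon>. p \<epsilon> r j = 0) (at_right 0)"
      using p_vanishing i jX r_in_X by blast
    then have "eventually (\<lambda>\<epsilon>. ?q \<epsilon> = 0) (at_right 0)"
      by (elim disjE eventually_mono) simp_all
    then show ?thesis ..
  qed (use via_r in blast)
  moreover have "pivotal (\<lambda>\<epsilon>. p \<epsilon> i j) \<or> pivotal ?q" using jY pivotal_p[of i j] i via_r by blast
  ultimately show ?thesis unfolding red_p_def using direct by (rule pivotal_add_or_vanishing[rotated])
qed

lemma condD_reduced: "condD (X - {r}) (red_Y X Y r) \<epsilon>0 (red_p p r)"
  unfolding condD_iff_pivotal[OF eps0_pos] using pivotal_red_p by blast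

end

theorem theorem2:
  fixes N :: nat and p :: "real \<Rightarrow> nat \<Rightarrow> nat \<Rightarrow> real"
    and Y :: "nat \<Rightarrow> nat set" and \<epsilon>0 :: real and r :: nat
  assumes "stochastic {1..N} p"
    and "condA {1..N} Y \<epsilon>0 p"
    and "condD {1..N} Y \<epsilon>0 p"
    and "r \<in> {1..N}"
  shows "condA ({1..N} - {r}) (red_Y {1..N} Y r) \<epsilon>0 (red_p p r)
       \<and> condD ({1..N} - {r}) (red_Y {1..N} Y r) \<epsilon>0 (red_p p r)"
proof (cases "{1..N} - {r} = {}")
  case True
  then show ?thesis using assms(2) unfolding condA_def condD_def by auto
next
  case False
  interpret perturbed_chain_reduction "{1..N}" Y \<epsilon>0 p r
    using assms False by unfold_locales auto
  show ?thesis using condA_reduced condD_reduced ..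
qed

end
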